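(* Let $\tau_0\in F$ satisfy $J(\tau_0)=0$. Let $A^2$ be a random variable with Beta$(\mu,\nu)$ distribution ($\mu,\nu>0$), $A=\sqrt{A^2}\ge0$, and let $X_0,X_1$ be second-order random variables independent of $A$. Define, for $\tau\in F$, $$X(\tau)=X_0\sum_{m=0}^{\infty}\frac{(-1)^mA^{2m}}{(2m)!}J(\tau)^{2m}+X_1\sum_{m=0}^{\infty}\frac{(-1)^mA^{2m}}{(2m+1)!}J(\tau)^{2m+1},$$ i.e. $X(\tau)=X_0\cos(AJ(\tau))+\frac{X_1}{A}\sin(AJ(\tau))$ (with the second term read as the series, so it is defined also when $A=0$). Then both series converge in mean square for every $\tau\in F$, $X$ is twice mean square $F^\alpha$-differentiable on $F$, and $X$ is a mean square solution of $$(D_F^\alpha)^2X(\tau)+A^2X(\tau)=0,\qquad X(\tau_0)=X_0,\qquad D_F^\alpha X(\tau_0)=X_1.$$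
   Context: Let $F\subset\mathbb{R}^n$ be a fractal curve, i.e. the image of a continuous one-to-one map $w:[a_1,b_1]\to F$ from a real interval onto $F$. For $[a,b]\subseteq[a_1,b_1]$ and $\alpha>0$, the mass function is $\gamma^\alpha(F,a,b)=\lim_{\delta\to0}\inf_{P:|P|\le\delta}\sum_{i=0}^{n-1}\frac{|w(t_{i+1})-w(t_i)|^\alpha}{\Gamma(\alpha+1)}$, the infimum over subdivisions $P=\{a=t_0<\dots<t_n=b\}$ with mesh $|P|=\max_i(t_{i+1}-t_i)\le\delta$ ($|\cdot|$ the Euclidean norm). Fix $p_0\in[a_1,b_1]$ and define the staircase function $S_F^\alpha(t)=\gamma^\alpha(F,p_0,t)$ for $t\ge p_0$ and $S_F^\alpha(t)=-\gamma^\alpha(F,t,p_0)$ for $t<p_0$. Standing assumption: $\alpha$ is such that $S_F^\alpha$ is finite, continuous and strictly increasing on $[a_1,b_1]$; set $J(\theta)=S_F^\alpha(w^{-1}(\theta))$ for $\theta\in F$. Limits $\theta'\to\theta$ are taken through points $\theta'\in F$. All random variables live on a probability space $(\mathcal S,\mathcal F,\mathbb P)$; a random process on $F$ is a family $X(\tau)$, $\tau\in F$, of random variables, of second order if $E[X(\tau)^2]<\infty$ for all $\tau$. It is mean square $F^\alpha$-differentiable at $\tau$ if there is a second-order random variable $D_F^\alpha X(\tau)$ with $\lim_{\tau'\to\tau,\ \tau'\neq\tau}E\big[\big(\frac{X(\tau')-X(\tau)}{J(\tau')-J(\tau)}-D_F^\alpha X(\tau)\big)^2\big]=0$; $(D_F^\alpha)^2X=D_F^\alpha(D_F^\alpha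 X)$. Mean square convergence of a series means mean square convergence ($E[(S_N-S)^2]\to0$) of its partial sums $S_N$. The equation is required to hold as an equality of random variables almost surely for every $\tau\in F$. *)

theory Defs
  imports "HOL-Probability.Probability"
begin

definition subdivs :: "real \<Rightarrow> real \<Rightarrow> real \<Rightarrow> (nat \<times> (nat \<Rightarrow> real)) set" where
  "subdivs a b \<delta> = {(n, t). t 0 = a \<and> t n = b \<and>
      (\<forall>i<n. t i < t (Suc i) \<and> t (Suc i) - t i \<le> \<delta>)}"

definition mass :: "real \<Rightarrow> (real \<Rightarrow> 'a::euclidean_space) \<Rightarrow> real \<Rightarrow> real \<Rightarrow> ereal" where
  "mass \<alpha> w a b = Lim (at_right 0)
     (\<lambda>\<delta>. INF nt \<in> subdivs a b \<delta>.
        ereal (\<Sum>i<fst nt. norm (w (snd nt (Suc i)) - w (snd nt i)) powr \<alpha> / Gamma (\<alpha> + 1)))"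

definition staircase :: "real \<Rightarrow> (real \<Rightarrow> 'a::euclidean_space) \<Rightarrow> real \<Rightarrow> real \<Rightarrow> real" where
  "staircase \<alpha> w p0 t =
     (if p0 \<le> t then real_of_ereal (mass \<alpha> w p0 t) else - real_of_ereal (mass \<alpha> w t p0))"

definition Jfun :: "real \<Rightarrow> (real \<Rightarrow> 'a::euclidean_space) \<Rightarrow> real \<Rightarrow> real \<Rightarrow> real \<Rightarrow> 'a \<Rightarrow> real" where
  "Jfun \<alpha> w p0 a1 b1 \<theta> = staircase \<alpha> w p0 (inv_into {a1..b1} w \<theta>)"

definition second_order :: "'s measure \<Rightarrow> ('s \<Rightarrow> real) \<Rightarrow> bool" where
  "second_order M Y \<longleftrightarrow> Y \<in> borel_measurable M \<and> integrable M (\<lambda>s. (Y s)\<^sup>2)"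

definition has_ms_deriv ::
  "'s measure \<Rightarrow> 'a::topological_space set \<Rightarrow> ('a \<Rightarrow> real) \<Rightarrow> ('a \<Rightarrow> 's \<Rightarrow> real) \<Rightarrow> ('s \<Rightarrow> real) \<Rightarrow> 'a \<Rightarrow> bool" where
  "has_ms_deriv M F J X D \<tau> \<longleftrightarrow> second_order M D \<and>
     ((\<lambda>\<tau>'. \<integral>\<^sup>+ s. ennreal (((X \<tau>' s - X \<tau> s) / (J \<tau>' - J \<tau>) - D s)\<^sup>2) \<partial>M) \<longlongrightarrow> 0)
       (at \<tau> within F)"

definition ms_converges :: "'s measure \<Rightarrow> (nat \<Rightarrow> 's \<Rightarrow> real) \<Rightarrow> ('s \<Rightarrow> real) \<Rightarrow> bool" where
  "ms_converges M S Y \<longleftrightarrow> (\<lambda>N. \<integral>\<^sup>+ s. ennreal ((S N s - Y s)\<^sup>2) \<partial>M) \<longlonglongrightarrow> 0"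

definition beta_density :: "real \<Rightarrow> real \<Rightarrow> real \<Rightarrow> real" where
  "beta_density \<mu> \<nu> x =
     (if 0 < x \<and> x < 1 then x powr (\<mu> - 1) * (1 - x) powr (\<nu> - 1) / Beta \<mu> \<nu> else 0)"

end

theory Submission
  imports Defs
begin

(*
  Since A^2 is Beta distributed, |A| <= 1 almost surely. The two series are the power series of
  cos (A J) and of sin (A J) / A, and for |A| <= 1 their terms are dominated, uniformly in A, by
  the exponential series of |J|; this gives the mean square convergence.

  Write X = X0 C + X1 S with C = cos (A J) and S = sin (A J) / A. As functions of J one has
  C' = - A^2 S and S' = C, so the derivative of Y0 C + Y1 S should be Y1 C - A^2 Y0 S, a process
  of the same shape; differentiating twice gives - A^2 X. For |A| <= 1 the second derivatives of
  C and S are bounded by 1, so pointwise the difference quotients with respect to J miss these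
  values by at most |dJ| (|Y0| + |Y1|). Squaring and integrating bounds the mean square error by
  2 E[Y0^2 + Y1^2] dJ^2, which tends to 0 because J is continuous along the curve; J is also
  injective there, so the quotients are defined.
*)

lemma derivative_quotient_error_le:
  fixes f f' f'' :: "real \<Rightarrow> real"
  assumes f': "\<And>z. (f has_real_derivative f' z) (at z)"
    and f'': "\<And>z. (f' has_real_derivative f'' z) (at z)"
    and bound: "\<And>z. \<bar>f'' z\<bar> \<le> B"
    and "y \<noteq> x"
  shows "\<bar>(f y - f x) / (y - x) - f' x\<bar> \<le> B * \<bar>y - x\<bar>"
proof -
  have "0 \<le> B"
    using bound[of 0] by linarith
  have f'_lipschitz: "\<bar>f' z - f' x\<bar> \<le> B * \<bar>z - x\<bar>" for z
    using field_differentiable_bound[of UNIV f' f'' B z x] f'' bound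
    by (auto simp: has_field_derivative_at_within)
  define g where "g z = f z - f' x * z" for z
  have "norm (g y - g x) \<le> (B * \<bar>y - x\<bar>) * norm (y - x)"
  proof (rule field_differentiable_bound[of "closed_segment x y"])
    fix z assume z: "z \<in> closed_segment x y"
    have "(g has_real_derivative f' z - f' x * 1) (at z)"
      unfolding g_def by (intro DERIV_diff f' DERIV_cmult DERIV_ident)
    then show "(g has_field_derivative f' z - f' x) (at z within closed_segment x y)"
      by (simp add: has_field_derivative_at_within)
    have "\<bar>z - x\<bar> \<le> \<bar>y - x\<bar>"
      using z by (auto simp: closed_segment_eq_real_ivl split: if_splits)
    then have "B * \<bar>z - x\<bar> \<le> B * \<bar>y - x\<bar>"
      using \<open>0 \<le> B\<close> by (rule mult_left_mono)
    then show "norm (f' z - f' x) \<le> B * \<bar>y - x\<bar>"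
      using f'_lipschitz[of z] by simp
  qed auto
  moreover have "(f y - f x) / (y - x) - f' x = (g y - g x) / (y - x)"
    using \<open>y \<noteq> x\<close> by (simp add: g_def field_simps)
  ultimately show ?thesis
    using \<open>y \<noteq> x\<close> by (simp add: abs_divide divide_le_eq)
qed

(* The case split is needed: in HOL sin (0 * j) / 0 = 0, not the limit j. *)
definition sin_scaled :: "real \<Rightarrow> real \<Rightarrow> real" where
  "sin_scaled a j = (if a = 0 then j else sin (a * j) / a)"

lemma sin_scaled_0_right [simp]: "sin_scaled a 0 = 0"
  by (simp add: sin_scaled_def)

lemma abs_sin_scaled_le: "\<bar>sin_scaled a j\<bar> \<le> \<bar>j\<bar>"
  using abs_sin_x_le_abs_x[of "a * j"]
  by (auto simp: sin_scaled_def abs_divide abs_mult divide_le_eq mult.commute)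

lemma abs_power2_mult_sin_scaled_le:
  assumes "\<bar>a\<bar> \<le> 1"
  shows "\<bar>a\<^sup>2 * sin_scaled a j\<bar> \<le> 1"
proof -
  have "a\<^sup>2 * sin_scaled a j = a * sin (a * j)"
    by (simp add: sin_scaled_def power2_eq_square)
  then have "\<bar>a\<^sup>2 * sin_scaled a j\<bar> = \<bar>a\<bar> * \<bar>sin (a * j)\<bar>"
    by (simp add: abs_mult)
  also have "\<dots> \<le> 1"
    using assms by (simp add: mult_le_one)
  finally show ?thesis .
qed

lemma has_real_derivative_sin_scaled: "(sin_scaled a has_real_derivative cos (a * j)) (at j)"
proof (cases "a = 0")
  case True
  then show ?thesis
    by (simp add: sin_scaled_def[abs_def] DERIV_ident)
next
  case False
  have "((\<lambda>j. sin (a * j) / a) has_real_derivative cos (a * j)) (at j)"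
    using False by (auto intro!: derivative_eq_intros)
  then show ?thesis
    using False by (simp add: sin_scaled_def[abs_def])
qed

lemma has_real_derivative_cos_mult:
  "((\<lambda>j. cos (a * j)) has_real_derivative - a\<^sup>2 * sin_scaled a j) (at j)"
proof -
  have "((\<lambda>j. cos (a * j)) has_real_derivative - sin (a * j) * a) (at j)"
    by (auto intro!: derivative_eq_intros)
  then show ?thesis
    by (simp add: sin_scaled_def power2_eq_square mult.commute)
qed

lemma
  assumes "\<bar>a\<bar> \<le> 1" and "j' \<noteq> j"
  shows cos_mult_quotient_error_le:
      "\<bar>(cos (a * j') - cos (a * j)) / (j' - j) + a\<^sup>2 * sin_scaled a j\<bar> \<le> \<bar>j' - j\<bar>"
    and sin_scaled_quotient_error_le:
      "\<bar>(sin_scaled a j' - sin_scaled a j) / (j' - j) - cos (a * j)\<bar> \<le> \<bar>j' - j\<bar>"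
proof -
  have "\<bar>(cos (a * j') - cos (a * j)) / (j' - j) - - a\<^sup>2 * sin_scaled a j\<bar> \<le> 1 * \<bar>j' - j\<bar>"
  proof (rule derivative_quotient_error_le[OF has_real_derivative_cos_mult _ _ \<open>j' \<noteq> j\<close>])
    show "((\<lambda>j. - a\<^sup>2 * sin_scaled a j) has_real_derivative - a\<^sup>2 * cos (a * z)) (at z)" for z
      by (intro DERIV_cmult has_real_derivative_sin_scaled)
    have "a\<^sup>2 \<le> 1"
      using assms(1) by (simp add: abs_square_le_1)
    then show "\<bar>- a\<^sup>2 * cos (a * z)\<bar> \<le> 1" for z
      by (simp add: abs_mult mult_le_one)
  qed
  then show "\<bar>(cos (a * j') - cos (a * j)) / (j' - j) + a\<^sup>2 * sin_scaled a j\<bar> \<le> \<bar>j' - j\<bar>"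
    by simp
  have "\<bar>(sin_scaled a j' - sin_scaled a j) / (j' - j) - cos (a * j)\<bar> \<le> 1 * \<bar>j' - j\<bar>"
    by (rule derivative_quotient_error_le[OF has_real_derivative_sin_scaled
          has_real_derivative_cos_mult _ \<open>j' \<noteq> j\<close>])
      (use abs_power2_mult_sin_scaled_le[OF assms(1)] in simp)
  then show "\<bar>(sin_scaled a j' - sin_scaled a j) / (j' - j) - cos (a * j)\<bar> \<le> \<bar>j' - j\<bar>"
    by simp
qed

lemma sums_cos_mult:
  fixes a j :: real
  shows "(\<lambda>m. (-1) ^ m * a ^ (2 * m) / fact (2 * m) * j ^ (2 * m)) sums cos (a * j)"
  using cos_paired[of "a * j"] by (simp add: power_mult_distrib mult_ac)

lemma sums_sin_scaled:
  fixes a j :: real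
  shows "(\<lambda>m. (-1) ^ m * a ^ (2 * m) / fact (2 * m + 1) * j ^ (2 * m + 1)) sums sin_scaled a j"
proof (cases "a = 0")
  case True
  then have "(\<lambda>m. (-1) ^ m * a ^ (2 * m) / fact (2 * m + 1) * j ^ (2 * m + 1)) =
      (\<lambda>m. if m = 0 then j else 0)"
    by (auto simp: fun_eq_iff)
  then show ?thesis
    using True sums_single[of 0 "\<lambda>_. j"] by (simp add: sin_scaled_def)
next
  case False
  have "(\<lambda>m. (-1) ^ m / fact (2 * m + 1) * (a * j) ^ (2 * m + 1) / a) sums (sin (a * j) / a)"
    by (rule sums_divide[OF sin_paired])
  then show ?thesis
    using False by (simp add: sin_scaled_def power_mult_distrib mult_ac)
qed

lemma abs_cos_sin_series_term_le:
  fixes a j :: real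
  assumes "\<bar>a\<bar> \<le> 1"
  shows "\<bar>(-1) ^ m * a ^ (2 * m) / fact k * j ^ k\<bar> \<le> \<bar>j\<bar> ^ k / fact k"
proof -
  have "\<bar>(-1) ^ m * a ^ (2 * m) / fact k * j ^ k\<bar> = \<bar>a\<bar> ^ (2 * m) * (\<bar>j\<bar> ^ k / fact k)"
    by (simp add: abs_mult power_abs)
  also have "\<dots> \<le> \<bar>j\<bar> ^ k / fact k"
    using assms by (intro mult_left_le_one_le power_le_one) auto
  finally show ?thesis .
qed

lemma summable_exp_series_reindex:
  fixes x :: real
  assumes "strict_mono k"
  shows "summable (\<lambda>m. \<bar>x\<bar> ^ k m / fact (k m))"
proof -
  define f where "f n = (if n \<in> range k then \<bar>x\<bar> ^ n / fact n else 0)" for n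
  have "summable f"
    by (rule summable_comparison_test'[OF summable_exp[of "\<bar>x\<bar>"], of 0])
      (auto simp: f_def divide_inverse mult.commute)
  then have "summable (\<lambda>m. f (k m))"
    using assms by (subst summable_mono_reindex) (auto simp: f_def)
  then show ?thesis
    by (simp add: f_def)
qed

lemma abs_sum_lessThan_minus_suminf_le:
  fixes f g :: "nat \<Rightarrow> real"
  assumes bound: "\<And>m. \<bar>f m\<bar> \<le> g m" and "summable g"
  shows "\<bar>(\<Sum>m<N. f m) - suminf f\<bar> \<le> suminf g - (\<Sum>m<N. g m)"
proof -
  have abs_f: "summable (\<lambda>m. \<bar>f m\<bar>)"
    using assms by (intro summable_rabs_comparison_test) auto
  then have "summable f"
    by (rule summable_rabs_cancel)
  then have "\<bar>(\<Sum>m<N. f m) - suminf f\<bar> = \<bar>\<Sum>m. f (m + N)\<bar>"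
    by (simp add: suminf_split_initial_segment[of f N])
  also have "\<dots> \<le> (\<Sum>m. \<bar>f (m + N)\<bar>)"
    using abs_f by (intro summable_rabs summable_ignore_initial_segment)
  also have "\<dots> \<le> (\<Sum>m. g (m + N))"
    using abs_f \<open>summable g\<close> bound by (intro suminf_le summable_ignore_initial_segment) auto
  also have "\<dots> = suminf g - (\<Sum>m<N. g m)"
    by (rule suminf_minus_initial_segment[OF \<open>summable g\<close>])
  finally show ?thesis .
qed

lemma nn_integral_square_tendsto_zero:
  fixes Z :: "'b \<Rightarrow> 's \<Rightarrow> real"
  assumes V: "integrable M V" "\<And>s. 0 \<le> V s"
    and e: "(e \<longlongrightarrow> 0) F" "\<And>i. 0 \<le> e i"
    and bound: "\<forall>\<^sub>F i in F. AE s in M. (Z i s)\<^sup>2 \<le> V s * e i"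
  shows "((\<lambda>i. \<integral>\<^sup>+ s. ennreal ((Z i s)\<^sup>2) \<partial>M) \<longlongrightarrow> 0) F"
proof (rule tendsto_sandwich[where f = "\<lambda>_. 0" and h = "\<lambda>i. ennreal (e i * integral\<^sup>L M V)"])
  have integral_eq: "(\<integral>\<^sup>+ s. ennreal (e i * V s) \<partial>M) = ennreal (e i * integral\<^sup>L M V)" for i
    using V e(2) by (subst nn_integral_eq_integral) auto
  show "\<forall>\<^sub>F i in F. (\<integral>\<^sup>+ s. ennreal ((Z i s)\<^sup>2) \<partial>M) \<le> ennreal (e i * integral\<^sup>L M V)"
    using bound
  proof (rule eventually_mono)
    fix i
    assume "AE s in M. (Z i s)\<^sup>2 \<le> V s * e i"
    then have "(\<integral>\<^sup>+ s. ennreal ((Z i s)\<^sup>2) \<partial>M) \<le> (\<integral>\<^sup>+ s. ennreal (e i * V s) \<partial>M)"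
      by (intro nn_integral_mono_AE) (auto elim!: eventually_mono intro: ennreal_leI simp: mult.commute)
    then show "(\<integral>\<^sup>+ s. ennreal ((Z i s)\<^sup>2) \<partial>M) \<le> ennreal (e i * integral\<^sup>L M V)"
      by (simp only: integral_eq)
  qed
  show "((\<lambda>i. ennreal (e i * integral\<^sup>L M V)) \<longlongrightarrow> 0) F"
    using tendsto_ennrealI[OF tendsto_mult_left_zero[OF e(1)]] by simp
qed auto

lemma power2_add_le:
  fixes u v :: real
  shows "(u + v)\<^sup>2 \<le> 2 * u\<^sup>2 + 2 * v\<^sup>2"
proof -
  have "(u + v)\<^sup>2 + (u - v)\<^sup>2 = 2 * u\<^sup>2 + 2 * v\<^sup>2"
    by (simp add: power2_eq_square algebra_simps)
  then show ?thesis
    using zero_le_power2[of "u - v"] by linarith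
qed

lemma power2_lincomb_le:
  fixes x y u v d :: real
  assumes "\<bar>u\<bar> \<le> d" and "\<bar>v\<bar> \<le> d"
  shows "(x * u + y * v)\<^sup>2 \<le> 2 * (x\<^sup>2 + y\<^sup>2) * d\<^sup>2"
proof -
  have "u\<^sup>2 \<le> d\<^sup>2" and "v\<^sup>2 \<le> d\<^sup>2"
    using power_mono[OF assms(1) abs_ge_zero, of 2] power_mono[OF assms(2) abs_ge_zero, of 2]
    by simp_all
  then have "x\<^sup>2 * u\<^sup>2 + y\<^sup>2 * v\<^sup>2 \<le> x\<^sup>2 * d\<^sup>2 + y\<^sup>2 * d\<^sup>2"
    by (intro add_mono mult_left_mono) simp_all
  then show ?thesis
    using power2_add_le[of "x * u" "y * v"] by (simp add: power_mult_distrib algebra_simps)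
qed

lemma second_order_add:
  assumes "second_order M Y" and "second_order M Z"
  shows "second_order M (\<lambda>s. Y s + Z s)"
  unfolding second_order_def
proof
  show measurable: "(\<lambda>s. Y s + Z s) \<in> borel_measurable M"
    using assms by (intro borel_measurable_add) (simp_all add: second_order_def)
  have "integrable M (\<lambda>s. 2 * (Y s)\<^sup>2 + 2 * (Z s)\<^sup>2)"
    using assms by (simp add: second_order_def)
  moreover have "AE s in M. norm ((Y s + Z s)\<^sup>2) \<le> norm (2 * (Y s)\<^sup>2 + 2 * (Z s)\<^sup>2)"
    using power2_add_le by simp
  ultimately show "integrable M (\<lambda>s. (Y s + Z s)\<^sup>2)"
    by (rule Bochner_Integration.integrable_bound[OF _ borel_measurable_power[OF measurable]])
qed

lemma second_order_mult_bounded: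
  assumes Y: "second_order M Y" and g: "g \<in> borel_measurable M" and bound: "AE s in M. \<bar>g s\<bar> \<le> B"
  shows "second_order M (\<lambda>s. g s * Y s)"
  unfolding second_order_def
proof
  show measurable: "(\<lambda>s. g s * Y s) \<in> borel_measurable M"
    using Y g by (intro borel_measurable_times) (simp_all add: second_order_def)
  have "integrable M (\<lambda>s. B\<^sup>2 * (Y s)\<^sup>2)"
    using Y by (simp add: second_order_def)
  moreover have "AE s in M. norm ((g s * Y s)\<^sup>2) \<le> norm (B\<^sup>2 * (Y s)\<^sup>2)"
    using bound
  proof eventually_elim
    case (elim s)
    then have "(g s)\<^sup>2 \<le> B\<^sup>2"
      using power_mono[of "\<bar>g s\<bar>" B 2] by simp
    then have "(g s * Y s)\<^sup>2 \<le> B\<^sup>2 * (Y s)\<^sup>2"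
      unfolding power_mult_distrib by (rule mult_right_mono) simp
    then show ?case
      by simp
  qed
  ultimately show "integrable M (\<lambda>s. (g s * Y s)\<^sup>2)"
    by (rule Bochner_Integration.integrable_bound[OF _ borel_measurable_power[OF measurable]])
qed

lemma ms_converges_mult_partial_sums:
  assumes "second_order M Y" and "summable g" and "AE s in M. \<forall>m. \<bar>c m s\<bar> \<le> g m"
  shows "ms_converges M (\<lambda>N s. Y s * (\<Sum>m<N. c m s)) (\<lambda>s. Y s * (\<Sum>m. c m s))"
  unfolding ms_converges_def
proof (rule nn_integral_square_tendsto_zero[where V = "\<lambda>s. (Y s)\<^sup>2"
      and e = "\<lambda>N. (suminf g - (\<Sum>m<N. g m))\<^sup>2"
      and Z = "\<lambda>N s. Y s * (\<Sum>m<N. c m s) - Y s * (\<Sum>m. c m s)"])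
  show "integrable M (\<lambda>s. (Y s)\<^sup>2)"
    using assms(1) by (simp add: second_order_def)
  show "(\<lambda>N. (suminf g - (\<Sum>m<N. g m))\<^sup>2) \<longlonglongrightarrow> 0"
  proof -
    have "(\<lambda>N. suminf g - (\<Sum>m<N. g m)) \<longlonglongrightarrow> 0"
      using tendsto_diff[OF tendsto_const summable_LIMSEQ[OF assms(2)], of "suminf g"] by simp
    from tendsto_power[OF this, of 2] show ?thesis
      by simp
  qed
  show "\<forall>\<^sub>F N in sequentially. AE s in M.
      (Y s * (\<Sum>m<N. c m s) - Y s * (\<Sum>m. c m s))\<^sup>2 \<le> (Y s)\<^sup>2 * (suminf g - (\<Sum>m<N. g m))\<^sup>2"
  proof (rule always_eventually, intro allI)
    fix N
    show "AE s in M. (Y s * (\<Sum>m<N. c m s) - Y s * (\<Sum>m. c m s))\<^sup>2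
        \<le> (Y s)\<^sup>2 * (suminf g - (\<Sum>m<N. g m))\<^sup>2"
      using assms(3)
    proof eventually_elim
      case (elim s)
      have tail: "\<bar>(\<Sum>m<N. c m s) - (\<Sum>m. c m s)\<bar> \<le> suminf g - (\<Sum>m<N. g m)"
        by (rule abs_sum_lessThan_minus_suminf_le[OF _ assms(2)]) (use elim in auto)
      have "(Y s * (\<Sum>m<N. c m s) - Y s * (\<Sum>m. c m s))\<^sup>2
          = (Y s)\<^sup>2 * ((\<Sum>m<N. c m s) - (\<Sum>m. c m s))\<^sup>2"
        by (simp add: power_mult_distrib flip: right_diff_distrib)
      also have "\<dots> \<le> (Y s)\<^sup>2 * (suminf g - (\<Sum>m<N. g m))\<^sup>2"
        using power_mono[OF tail abs_ge_zero, of 2] by (intro mult_left_mono) simp_all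
      finally show ?case .
    qed
  qed
qed simp_all

lemma
  fixes j :: real
  assumes Y: "second_order M Y" and A: "AE s in M. \<bar>A s\<bar> \<le> 1"
  shows ms_converges_cos_series:
      "ms_converges M (\<lambda>N s. Y s * (\<Sum>m<N. (-1) ^ m * A s ^ (2 * m) / fact (2 * m) * j ^ (2 * m)))
        (\<lambda>s. Y s * (\<Sum>m. (-1) ^ m * A s ^ (2 * m) / fact (2 * m) * j ^ (2 * m)))"
    and ms_converges_sin_series:
      "ms_converges M
        (\<lambda>N s. Y s * (\<Sum>m<N. (-1) ^ m * A s ^ (2 * m) / fact (2 * m + 1) * j ^ (2 * m + 1)))
        (\<lambda>s. Y s * (\<Sum>m. (-1) ^ m * A s ^ (2 * m) / fact (2 * m + 1) * j ^ (2 * m + 1)))"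
proof -
  have "summable (\<lambda>m. \<bar>j\<bar> ^ (2 * m) / fact (2 * m))"
    and "summable (\<lambda>m. \<bar>j\<bar> ^ (2 * m + 1) / fact (2 * m + 1))"
    by (intro summable_exp_series_reindex, simp add: strict_mono_def)+
  moreover have "AE s in M. \<forall>m. \<bar>(-1) ^ m * A s ^ (2 * m) / fact (2 * m) * j ^ (2 * m)\<bar>
      \<le> \<bar>j\<bar> ^ (2 * m) / fact (2 * m)"
    using A by eventually_elim (intro allI abs_cos_sin_series_term_le)
  moreover have "AE s in M. \<forall>m. \<bar>(-1) ^ m * A s ^ (2 * m) / fact (2 * m + 1) * j ^ (2 * m + 1)\<bar>
      \<le> \<bar>j\<bar> ^ (2 * m + 1) / fact (2 * m + 1)"
    using A by eventually_elim (intro allI abs_cos_sin_series_term_le)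
  ultimately show "ms_converges M (\<lambda>N s. Y s * (\<Sum>m<N. (-1) ^ m * A s ^ (2 * m) / fact (2 * m) * j ^ (2 * m)))
        (\<lambda>s. Y s * (\<Sum>m. (-1) ^ m * A s ^ (2 * m) / fact (2 * m) * j ^ (2 * m)))"
    and "ms_converges M
        (\<lambda>N s. Y s * (\<Sum>m<N. (-1) ^ m * A s ^ (2 * m) / fact (2 * m + 1) * j ^ (2 * m + 1)))
        (\<lambda>s. Y s * (\<Sum>m. (-1) ^ m * A s ^ (2 * m) / fact (2 * m + 1) * j ^ (2 * m + 1)))"
    by (auto intro: ms_converges_mult_partial_sums[OF Y])
qed

lemma second_order_minus_power2_mult:
  assumes "second_order M Y" and "A \<in> borel_measurable M" and "AE s in M. \<bar>A s\<bar> \<le> 1"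
  shows "second_order M (\<lambda>s. - (A s)\<^sup>2 * Y s)"
proof (rule second_order_mult_bounded[OF assms(1), where B = 1])
  show "(\<lambda>s. - (A s)\<^sup>2) \<in> borel_measurable M"
    using assms(2) by measurable
  show "AE s in M. \<bar>- (A s)\<^sup>2\<bar> \<le> 1"
    using assms(3) by eventually_elim (simp add: abs_square_le_1)
qed

lemma has_ms_derivI:
  fixes J :: "'a::topological_space \<Rightarrow> real"
  assumes D: "second_order M D" and V: "integrable M V" "\<And>s. 0 \<le> V s"
    and J: "continuous_on F J" and "\<tau> \<in> F"
    and bound: "\<And>\<tau>'. \<tau>' \<in> F \<Longrightarrow> \<tau>' \<noteq> \<tau> \<Longrightarrow>
      AE s in M. ((Y \<tau>' s - Y \<tau> s) / (J \<tau>' - J \<tau>) - D s)\<^sup>2 \<le> V s * (J \<tau>' - J \<tau>)\<^sup>2"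
  shows "has_ms_deriv M F J Y D \<tau>"
  unfolding has_ms_deriv_def
proof (intro conjI D)
  have "((\<lambda>\<tau>'. J \<tau>' - J \<tau>) \<longlongrightarrow> 0) (at \<tau> within F)"
    using J \<open>\<tau> \<in> F\<close> by (simp add: continuous_on_def LIM_zero)
  from tendsto_power[OF this, of 2]
  have lim: "((\<lambda>\<tau>'. (J \<tau>' - J \<tau>)\<^sup>2) \<longlongrightarrow> 0) (at \<tau> within F)"
    by simp
  have ev: "\<forall>\<^sub>F \<tau>' in at \<tau> within F.
      AE s in M. ((Y \<tau>' s - Y \<tau> s) / (J \<tau>' - J \<tau>) - D s)\<^sup>2 \<le> V s * (J \<tau>' - J \<tau>)\<^sup>2"
    unfolding eventually_at_filter using bound by (intro always_eventually[where F = "nhds \<tau>"]) blast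
  show "((\<lambda>\<tau>'. \<integral>\<^sup>+ s. ennreal (((Y \<tau>' s - Y \<tau> s) / (J \<tau>' - J \<tau>) - D s)\<^sup>2) \<partial>M)
      \<longlongrightarrow> 0) (at \<tau> within F)"
    by (rule nn_integral_square_tendsto_zero[OF V lim _ ev]) simp
qed

lemma continuous_on_Jfun:
  assumes "continuous_on {a1..b1} w" and "inj_on w {a1..b1}"
    and "continuous_on {a1..b1} (staircase \<alpha> w p0)"
  shows "continuous_on (w ` {a1..b1}) (Jfun \<alpha> w p0 a1 b1)"
proof -
  have "continuous_on (w ` {a1..b1}) (inv_into {a1..b1} w)"
    using assms(1,2) by (intro continuous_on_inv) auto
  then show ?thesis
    unfolding Jfun_def[abs_def]
    by (rule continuous_on_compose2[OF assms(3)]) (auto intro: inv_into_into)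
qed

lemma inj_on_Jfun:
  assumes "strict_mono_on {a1..b1} (staircase \<alpha> w p0)"
  shows "inj_on (Jfun \<alpha> w p0 a1 b1) (w ` {a1..b1})"
proof -
  have "inv_into {a1..b1} w ` w ` {a1..b1} \<subseteq> {a1..b1}"
    by (auto intro: inv_into_into)
  then have "inj_on (staircase \<alpha> w p0) (inv_into {a1..b1} w ` w ` {a1..b1})"
    using inj_on_subset[OF strict_mono_on_imp_inj_on[OF assms]] by blast
  then have "inj_on (staircase \<alpha> w p0 \<circ> inv_into {a1..b1} w) (w ` {a1..b1})"
    by (rule comp_inj_on[OF inj_on_inv_into[OF order_refl]])
  then show ?thesis
    by (simp add: Jfun_def[abs_def] comp_def)
qed

lemma AE_beta_distributed_in_unit_interval:
  assumes "distributed M lborel X (\<lambda>x. ennreal (beta_density \<mu> \<nu> x))"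
  shows "AE s in M. 0 \<le> X s \<and> X s \<le> 1"
proof -
  have "AE x in distr M lborel X. 0 \<le> x \<and> x \<le> 1"
    unfolding distributed_distr_eq_density[OF assms]
    by (subst AE_density) (auto simp: beta_density_def split: if_splits)
  then show ?thesis
    using distributed_measurable[OF assms] by (subst (asm) AE_distr_iff) auto
qed

definition cos_sin_process ::
    "('s \<Rightarrow> real) \<Rightarrow> ('s \<Rightarrow> real) \<Rightarrow> ('s \<Rightarrow> real) \<Rightarrow> ('a \<Rightarrow> real) \<Rightarrow> 'a \<Rightarrow> 's \<Rightarrow> real" where
  "cos_sin_process A Y0 Y1 J \<tau> s = Y0 s * cos (A s * J \<tau>) + Y1 s * sin_scaled (A s) (J \<tau>)"

lemma second_order_cos_sin_process:
  assumes "second_order M Y0" and "second_order M Y1" and A[measurable]: "A \<in> borel_measurable M"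
  shows "second_order M (cos_sin_process A Y0 Y1 J \<tau>)"
proof -
  have "(\<lambda>s. cos (A s * J \<tau>)) \<in> borel_measurable M"
    by measurable
  then have "second_order M (\<lambda>s. cos (A s * J \<tau>) * Y0 s)"
    by (rule second_order_mult_bounded[OF assms(1), where B = 1]) (simp add: AE_I2)
  moreover have "(\<lambda>s. sin_scaled (A s) (J \<tau>)) \<in> borel_measurable M"
    unfolding sin_scaled_def by measurable
  then have "second_order M (\<lambda>s. sin_scaled (A s) (J \<tau>) * Y1 s)"
    by (rule second_order_mult_bounded[OF assms(2), where B = "\<bar>J \<tau>\<bar>"])
      (simp add: AE_I2 abs_sin_scaled_le)
  ultimately show ?thesis
    unfolding cos_sin_process_def[abs_def] by (simp add: second_order_add mult.commute)
qed

lemma has_ms_deriv_cos_sin_process: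
  fixes J :: "'a::topological_space \<Rightarrow> real"
  assumes Y0: "second_order M Y0" and Y1: "second_order M Y1"
    and A: "A \<in> borel_measurable M" "AE s in M. \<bar>A s\<bar> \<le> 1"
    and J: "continuous_on F J" "inj_on J F" and "\<tau> \<in> F"
  shows "has_ms_deriv M F J (cos_sin_process A Y0 Y1 J)
    (cos_sin_process A Y1 (\<lambda>s. - (A s)\<^sup>2 * Y0 s) J \<tau>) \<tau>"
proof (rule has_ms_derivI[OF _ _ _ J(1) \<open>\<tau> \<in> F\<close>, where V = "\<lambda>s. 2 * ((Y0 s)\<^sup>2 + (Y1 s)\<^sup>2)"])
  show "second_order M (cos_sin_process A Y1 (\<lambda>s. - (A s)\<^sup>2 * Y0 s) J \<tau>)"
    using second_order_minus_power2_mult[OF Y0 A] by (rule second_order_cos_sin_process[OF Y1 _ A(1)])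
  show "integrable M (\<lambda>s. 2 * ((Y0 s)\<^sup>2 + (Y1 s)\<^sup>2))"
    using Y0 Y1 by (simp add: second_order_def)
  fix \<tau>' assume "\<tau>' \<in> F" "\<tau>' \<noteq> \<tau>"
  then have "J \<tau>' \<noteq> J \<tau>"
    using J(2) \<open>\<tau> \<in> F\<close> by (auto dest: inj_onD)
  have quotient_eq: "((y0 * c' + y1 * s') - (y0 * c + y1 * s)) / h - (y1 * c + (- b * y0) * s)
      = y0 * ((c' - c) / h + b * s) + y1 * ((s' - s) / h - c)" for y0 y1 c c' s s' h b :: real
    by (simp add: diff_divide_distrib add_divide_distrib algebra_simps)
  show "AE s in M. ((cos_sin_process A Y0 Y1 J \<tau>' s - cos_sin_process A Y0 Y1 J \<tau> s) / (J \<tau>' - J \<tau>)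
      - cos_sin_process A Y1 (\<lambda>s. - (A s)\<^sup>2 * Y0 s) J \<tau> s)\<^sup>2
    \<le> 2 * ((Y0 s)\<^sup>2 + (Y1 s)\<^sup>2) * (J \<tau>' - J \<tau>)\<^sup>2"
    using A(2)
  proof eventually_elim
    case (elim s)
    have "\<bar>(cos (A s * J \<tau>') - cos (A s * J \<tau>)) / (J \<tau>' - J \<tau>) + (A s)\<^sup>2 * sin_scaled (A s) (J \<tau>)\<bar>
        \<le> \<bar>J \<tau>' - J \<tau>\<bar>"
      and "\<bar>(sin_scaled (A s) (J \<tau>') - sin_scaled (A s) (J \<tau>)) / (J \<tau>' - J \<tau>) - cos (A s * J \<tau>)\<bar>
        \<le> \<bar>J \<tau>' - J \<tau>\<bar>"
      using elim \<open>J \<tau>' \<noteq> J \<tau>\<close>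
      by (simp_all add: cos_mult_quotient_error_le sin_scaled_quotient_error_le)
    from power2_lincomb_le[OF this, of "Y0 s" "Y1 s"] show ?case
      unfolding cos_sin_process_def quotient_eq by simp
  qed
qed simp

theorem mainTheorem11:
  fixes w :: "real \<Rightarrow> 'a::euclidean_space"
    and F :: "'a set"
    and a1 b1 p0 \<alpha> \<mu> \<nu> :: real
    and \<tau>0 :: 'a
    and M :: "'s measure"
    and A2 X0 X1 :: "'s \<Rightarrow> real"
  defines "J \<equiv> Jfun \<alpha> w p0 a1 b1"
    and "A \<equiv> (\<lambda>s. sqrt (A2 s))"
  defines "Ccos \<equiv> (\<lambda>\<tau> s m. (-1) ^ m * A s ^ (2 * m) / fact (2 * m) * J \<tau> ^ (2 * m))"
    and "Csin \<equiv> (\<lambda>\<tau> s m. (-1) ^ m * A s ^ (2 * m) / fact (2 * m + 1) * J \<tau> ^ (2 * m + 1))"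
  defines "X \<equiv> (\<lambda>\<tau> s. X0 s * (\<Sum>m. Ccos \<tau> s m) + X1 s * (\<Sum>m. Csin \<tau> s m))"
  assumes "a1 \<le> b1" and "p0 \<in> {a1..b1}"
    and "continuous_on {a1..b1} w" and "inj_on w {a1..b1}" and "F = w ` {a1..b1}"
    and "\<alpha> > 0"
    and "\<forall>t\<in>{a1..b1}. (if p0 \<le> t then mass \<alpha> w p0 t else mass \<alpha> w t p0) < \<infinity>"
    and "continuous_on {a1..b1} (staircase \<alpha> w p0)"
    and "strict_mono_on {a1..b1} (staircase \<alpha> w p0)"
    and "\<tau>0 \<in> F" and "J \<tau>0 = 0"
    and "prob_space M"
    and "\<mu> > 0" and "\<nu> > 0"
    and "distributed M lborel A2 (\<lambda>x. ennreal (beta_density \<mu> \<nu> x))"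
    and "second_order M X0" and "second_order M X1"
    and "prob_space.indep_var M borel A borel X0"
    and "prob_space.indep_var M borel A borel X1"
  shows "(\<forall>\<tau>\<in>F. ms_converges M (\<lambda>N s. X0 s * (\<Sum>m<N. Ccos \<tau> s m)) (\<lambda>s. X0 s * (\<Sum>m. Ccos \<tau> s m))
                \<and> ms_converges M (\<lambda>N s. X1 s * (\<Sum>m<N. Csin \<tau> s m)) (\<lambda>s. X1 s * (\<Sum>m. Csin \<tau> s m)))
       \<and> (\<exists>DX DDX. (\<forall>\<tau>\<in>F. has_ms_deriv M F J X (DX \<tau>) \<tau>)
                 \<and> (\<forall>\<tau>\<in>F. has_ms_deriv M F J DX (DDX \<tau>) \<tau>)
                 \<and> (\<forall>\<tau>\<in>F. AE s in M. DDX \<tau> s + (A s)\<^sup>2 * X \<tau> s = 0)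
                 \<and> (AE s in M. X \<tau>0 s = X0 s)
                 \<and> (AE s in M. DX \<tau>0 s = X1 s))"
proof -
  (* Of the distributional hypotheses only |A| <= 1 a.s. is used. *)
  note A2_distributed = \<open>distributed M lborel A2 (\<lambda>x. ennreal (beta_density \<mu> \<nu> x))\<close>
  have [measurable]: "A2 \<in> borel_measurable M"
    using distributed_measurable[OF A2_distributed] by simp
  then have A_measurable: "A \<in> borel_measurable M"
    unfolding A_def by measurable
  have A_le_1: "AE s in M. \<bar>A s\<bar> \<le> 1"
    using AE_beta_distributed_in_unit_interval[OF A2_distributed]
    by eventually_elim (simp add: A_def)
  have J_continuous: "continuous_on F J" and J_inj: "inj_on J F"
    unfolding J_def \<open>F = w ` {a1..b1}\<close>
    using \<open>continuous_on {a1..b1} w\<close> \<open>inj_on w {a1..b1}\<close>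
      \<open>continuous_on {a1..b1} (staircase \<alpha> w p0)\<close> \<open>strict_mono_on {a1..b1} (staircase \<alpha> w p0)\<close>
    by (simp_all add: continuous_on_Jfun inj_on_Jfun)
  have X_eq: "X = cos_sin_process A X0 X1 J"
    using sums_cos_mult sums_sin_scaled
    by (simp add: X_def Ccos_def Csin_def cos_sin_process_def fun_eq_iff sums_iff)
  have ms_convergence: "ms_converges M (\<lambda>N s. X0 s * (\<Sum>m<N. Ccos \<tau> s m)) (\<lambda>s. X0 s * (\<Sum>m. Ccos \<tau> s m))
      \<and> ms_converges M (\<lambda>N s. X1 s * (\<Sum>m<N. Csin \<tau> s m)) (\<lambda>s. X1 s * (\<Sum>m. Csin \<tau> s m))" for \<tau>
    unfolding Ccos_def Csin_def
    using ms_converges_cos_series[OF \<open>second_order M X0\<close> A_le_1]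
      ms_converges_sin_series[OF \<open>second_order M X1\<close> A_le_1]
    by blast
  define DX where "DX = cos_sin_process A X1 (\<lambda>s. - (A s)\<^sup>2 * X0 s) J"
  define DDX where "DDX = cos_sin_process A (\<lambda>s. - (A s)\<^sup>2 * X0 s) (\<lambda>s. - (A s)\<^sup>2 * X1 s) J"
  have minus_A2_X0: "second_order M (\<lambda>s. - (A s)\<^sup>2 * X0 s)"
    using \<open>second_order M X0\<close> A_measurable A_le_1 by (rule second_order_minus_power2_mult)
  have "has_ms_deriv M F J X (DX \<tau>) \<tau>" if "\<tau> \<in> F" for \<tau>
    unfolding X_eq DX_def
    using \<open>second_order M X0\<close> \<open>second_order M X1\<close> A_measurable A_le_1 J_continuous J_inj that
    by (rule has_ms_deriv_cos_sin_process)
  moreover have "has_ms_deriv M F J DX (DDX \<tau>) \<tau>" if "\<tau> \<in> F" for \<tau>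
    unfolding DX_def DDX_def
    using \<open>second_order M X1\<close> minus_A2_X0 A_measurable A_le_1 J_continuous J_inj that
    by (rule has_ms_deriv_cos_sin_process)
  moreover have "DDX \<tau> s + (A s)\<^sup>2 * X \<tau> s = 0" for \<tau> s
    by (simp add: X_eq DDX_def cos_sin_process_def algebra_simps)
  moreover have "X \<tau>0 s = X0 s" and "DX \<tau>0 s = X1 s" for s
    by (simp_all add: X_eq DX_def cos_sin_process_def \<open>J \<tau>0 = 0\<close>)
  ultimately show ?thesis
    using ms_convergence by blast
qed

end
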